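(* Let $G$ be a simple graph with canonical mixed graph $F$ and let $X,Y$ be as defined in the context. Let $u,v\in X$ be distinct vertices with $uv\notin E(G)$. Then $cM_2(G+uv)\ge cM_2(G)$. Moreover, if $cM_2(G+uv)=cM_2(G)$, then $d_G(u)=d_G(v)$, $d^+_F(u)=d^-_F(u)$ and $d^+_F(v)=d^-_F(v)$.
   Context: All graphs are finite and simple; $d_G(u)$ is the degree of $u$ and $cM_2(G)=\sum_{uv\in E(G)}|d_G(u)^2-d_G(v)^2|$. $G+uv$ denotes $G$ with the edge $uv$ added. The canonical mixed graph $F$ of $G$ has vertex set $V(G)$; for each edge $uv\in E(G)$: if $d_G(u)>d_G(v)$ then $F$ contains the arc $\overrightarrow{uv}$, and if $d_G(u)=d_G(v)$ then $F$ contains the undirected edge $uv$. $d^+_F(u)$ (resp. $d^-_F(u)$) is the number of arcs of $F$ with tail (resp. head) $u$. $X=\{u\in V(G): d^+_F(u)\ge d^-_F(u)\}$ and $Y=\{u\in V(G): d^+_F(u)< d^-_F(u)\}$. *)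

theory Defs
  imports Main
begin

definition simple_graph :: "'a set \<Rightarrow> 'a set set \<Rightarrow> bool" where
  "simple_graph V E \<longleftrightarrow> finite V \<and> (\<forall>e\<in>E. e \<subseteq> V \<and> card e = 2)"

definition degree :: "'a set set \<Rightarrow> 'a \<Rightarrow> nat" where
  "degree E u = card {e\<in>E. u \<in> e}"

text \<open>cM2(G) = sum over edges uv of |d(u)^2 - d(v)^2|.  Each edge {u,v} is
  counted via both ordered pairs (u,v),(v,u), hence the division by 2 (exact).\<close>
definition cM2 :: "'a set \<Rightarrow> 'a set set \<Rightarrow> int" where
  "cM2 V E = (\<Sum>p\<in>{(u,v). u \<in> V \<and> v \<in> V \<and> {u,v} \<in> E}.
      \<bar>int (degree E (fst p))^2 - int (degree E (snd p))^2\<bar>) div 2"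

text \<open>Canonical mixed graph F: an edge uv with d(u) > d(v) becomes the arc u\<rightarrow>v,
  edges between vertices of equal degree stay undirected.\<close>
definition arcs :: "'a set \<Rightarrow> 'a set set \<Rightarrow> ('a \<times> 'a) set" where
  "arcs V E = {(u,v). u \<in> V \<and> v \<in> V \<and> {u,v} \<in> E \<and> degree E u > degree E v}"

definition undirected_edges :: "'a set \<Rightarrow> 'a set set \<Rightarrow> 'a set set" where
  "undirected_edges V E = {e\<in>E. \<exists>u v. e = {u,v} \<and> degree E u = degree E v}"

definition outdeg :: "'a set \<Rightarrow> 'a set set \<Rightarrow> 'a \<Rightarrow> nat" where
  "outdeg V E u = card {a\<in>arcs V E. fst a = u}"

definition indeg :: "'a set \<Rightarrow> 'a set set \<Rightarrow> 'a \<Rightarrow> nat" where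
  "indeg V E u = card {a\<in>arcs V E. snd a = u}"

definition Xset :: "'a set \<Rightarrow> 'a set set \<Rightarrow> 'a set" where
  "Xset V E = {u\<in>V. outdeg V E u \<ge> indeg V E u}"

definition Yset :: "'a set \<Rightarrow> 'a set set \<Rightarrow> 'a set" where
  "Yset V E = {u\<in>V. outdeg V E u < indeg V E u}"

definition add_edge :: "'a set set \<Rightarrow> 'a \<Rightarrow> 'a \<Rightarrow> 'a set set" where
  "add_edge E u v = insert {u,v} E"

end

theory Submission
  imports Defs
begin

text \<open>Adding the edge uv raises only the degrees of u and v, each by one. The edge uv itself
  contributes a nonnegative term, and for a neighbour w of x \<in> {u,v} the term of xw grows by
  2 d(x) + 1 if d(w) \<le> d(x) and shrinks by the same amount otherwise. So the total change at x
  is (2 d(x) + 1) times the number of neighbours of degree at most d(x) minus the in-degree of x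
  in F; as these neighbours include the out-neighbours of x in F, the change is nonnegative
  for x \<in> X. Equality forces every one of these nonnegative contributions to vanish.\<close>

definition neighbours :: "'a set \<Rightarrow> 'a set set \<Rightarrow> 'a \<Rightarrow> 'a set" where
  "neighbours V E x = {w\<in>V. {x,w} \<in> E}"

definition adj_pairs :: "'a set \<Rightarrow> 'a set set \<Rightarrow> ('a \<times> 'a) set" where
  "adj_pairs V E = {(a,b). a \<in> V \<and> b \<in> V \<and> {a,b} \<in> E}"

definition sq_degree_gap :: "'a set set \<Rightarrow> 'a \<times> 'a \<Rightarrow> int" where
  "sq_degree_gap E p = \<bar>int (degree E (fst p))^2 - int (degree E (snd p))^2\<bar>"

lemma cM2_eq_sum_adj_pairs: "cM2 V E = (\<Sum>p\<in>adj_pairs V E. sq_degree_gap E p) div 2"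
  unfolding cM2_def adj_pairs_def sq_degree_gap_def by simp

lemma sq_degree_gap_swap: "sq_degree_gap E (b,a) = sq_degree_gap E (a,b)"
  unfolding sq_degree_gap_def by (simp add: abs_minus_commute)

lemma sq_degree_gap_eq_0_iff: "sq_degree_gap E (a,b) = 0 \<longleftrightarrow> degree E a = degree E b"
  unfolding sq_degree_gap_def
  by (metis eq_iff_diff_eq_0 abs_eq_0 of_nat_eq_iff of_nat_power power2_eq_iff_nonneg of_nat_0_le_iff fst_conv snd_conv)

lemma simple_graph_finite_edges: "simple_graph V E \<Longrightarrow> finite E"
  unfolding simple_graph_def by (meson PowI finite_Pow_iff finite_subset subsetI)

lemma simple_graph_finite_neighbours: "simple_graph V E \<Longrightarrow> finite (neighbours V E x)"
  unfolding simple_graph_def neighbours_def by simp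

lemma simple_graph_no_loop: "simple_graph V E \<Longrightarrow> {a} \<notin> E"
  unfolding simple_graph_def by fastforce

lemma degree_add_edge:
  assumes "simple_graph V E" "{u,v} \<notin> E"
  shows "degree (add_edge E u v) x = degree E x + (if x = u \<or> x = v then 1 else 0)"
proof (cases "x = u \<or> x = v")
  case True
  then have "{e\<in>add_edge E u v. x \<in> e} = insert {u,v} {e\<in>E. x \<in> e}"
    unfolding add_edge_def by auto
  moreover have "finite {e\<in>E. x \<in> e}"
    using simple_graph_finite_edges[OF assms(1)] by simp
  ultimately show ?thesis using True assms(2) unfolding degree_def by simp
next
  case False
  then have "{e\<in>add_edge E u v. x \<in> e} = {e\<in>E. x \<in> e}"
    unfolding add_edge_def by auto
  then show ?thesis using False unfolding degree_def by simp
qed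

lemma abs_sq_diff_succ:
  fixes a b :: int
  assumes "0 \<le> a" "0 \<le> b"
  shows "\<bar>(a + 1)^2 - b^2\<bar> - \<bar>a^2 - b^2\<bar> = (if b \<le> a then 2 * a + 1 else - (2 * a + 1))"
proof (cases "b \<le> a")
  case True
  then have "b^2 \<le> a^2" "b^2 \<le> (a + 1)^2" using assms by (simp_all add: power_mono)
  then show ?thesis using True by (simp add: power2_eq_square algebra_simps)
next
  case False
  then have "a^2 \<le> b^2" "(a + 1)^2 \<le> b^2" using assms by (simp_all add: power_mono)
  then show ?thesis using False by (simp add: power2_eq_square algebra_simps)
qed

lemma outdeg_eq_card_lower_neighbours:
  assumes "x \<in> V"
  shows "outdeg V E x = card {w\<in>neighbours V E x. degree E w < degree E x}"
proof -
  have "{a\<in>arcs V E. fst a = x} = Pair x ` {w\<in>neighbours V E x. degree E w < degree E x}"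
    using assms unfolding arcs_def neighbours_def by auto
  then show ?thesis unfolding outdeg_def by (simp add: card_image inj_on_def)
qed

lemma indeg_eq_card_higher_neighbours:
  assumes "x \<in> V"
  shows "indeg V E x = card {w\<in>neighbours V E x. degree E x < degree E w}"
proof -
  have "{a\<in>arcs V E. snd a = x} = (\<lambda>w. (w,x)) ` {w\<in>neighbours V E x. degree E x < degree E w}"
    using assms unfolding arcs_def neighbours_def by (auto simp: insert_commute)
  then show ?thesis unfolding indeg_def by (simp add: card_image inj_on_def)
qed

lemma Xset_higher_le_lower_neighbours:
  assumes "simple_graph V E" "x \<in> Xset V E"
  defines "lower \<equiv> card {w\<in>neighbours V E x. degree E w \<le> degree E x}"
  shows "indeg V E x \<le> lower"
    and "indeg V E x = lower \<Longrightarrow> outdeg V E x = indeg V E x"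
proof -
  have xV: "x \<in> V" and in_le_out: "indeg V E x \<le> outdeg V E x"
    using assms(2) unfolding Xset_def by auto
  have "outdeg V E x \<le> lower"
    unfolding outdeg_eq_card_lower_neighbours[OF xV] lower_def
    using simple_graph_finite_neighbours[OF assms(1)] by (intro card_mono) auto
  then show "indeg V E x \<le> lower" "indeg V E x = lower \<Longrightarrow> outdeg V E x = indeg V E x"
    using in_le_out by simp_all
qed

lemma sum_gap_change_at_endpoint:
  assumes sg: "simple_graph V E" and uv: "{u,v} \<notin> E" and x: "x = u \<or> x = v" and xV: "x \<in> V"
  defines "E' \<equiv> add_edge E u v"
  shows "(\<Sum>w\<in>neighbours V E x. sq_degree_gap E' (x,w) - sq_degree_gap E (x,w))
     = (2 * int (degree E x) + 1)
       * (int (card {w\<in>neighbours V E x. degree E w \<le> degree E x}) - int (indeg V E x))"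
proof -
  let ?N = "neighbours V E x"
  let ?c = "2 * int (degree E x) + 1"
  have not_endpoint: "w \<noteq> u \<and> w \<noteq> v" if "w \<in> ?N" for w
  proof -
    have "{x,w} \<in> E" using that unfolding neighbours_def by simp
    then have "w \<noteq> x" "{x,w} \<noteq> {u,v}" using simple_graph_no_loop[OF sg] uv by auto
    then show ?thesis using x by (auto simp: insert_commute)
  qed
  have "(\<Sum>w\<in>?N. sq_degree_gap E' (x,w) - sq_degree_gap E (x,w))
      = (\<Sum>w\<in>?N. if degree E w \<le> degree E x then ?c else - ?c)"
  proof (rule sum.cong[OF refl])
    fix w assume "w \<in> ?N"
    then have "int (degree E' w) = int (degree E w)" "int (degree E' x) = int (degree E x) + 1"
      using not_endpoint x degree_add_edge[OF sg uv] unfolding E'_def by auto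
    then show "sq_degree_gap E' (x,w) - sq_degree_gap E (x,w)
        = (if degree E w \<le> degree E x then ?c else - ?c)"
      using abs_sq_diff_succ[of "int (degree E x)" "int (degree E w)"]
      unfolding sq_degree_gap_def fst_conv snd_conv
      by (simp only: of_nat_0_le_iff of_nat_le_iff simp_thms)
  qed
  also have "\<dots> = ?c * int (card {w\<in>?N. degree E w \<le> degree E x})
      - ?c * int (card {w\<in>?N. degree E x < degree E w})"
    using simple_graph_finite_neighbours[OF sg]
    by (simp add: sum.If_cases Int_def not_le algebra_simps)
  finally show ?thesis
    by (simp add: indeg_eq_card_higher_neighbours[OF xV] right_diff_distrib)
qed

text \<open>Outside the pairs (u,v), (v,u) only pairs meeting u or v change their gap; those are
  xw and wx for x \<in> {u,v} and w a neighbour of x in G, four disjoint families.\<close>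
lemma sum_adj_pairs_add_edge:
  assumes sg: "simple_graph V E" and uv: "{u,v} \<notin> E" "u \<noteq> v" "u \<in> V" "v \<in> V"
  defines "E' \<equiv> add_edge E u v"
  defines "\<delta> \<equiv> \<lambda>p. sq_degree_gap E' p - sq_degree_gap E p"
  shows "(\<Sum>p\<in>adj_pairs V E'. sq_degree_gap E' p) = (\<Sum>p\<in>adj_pairs V E. sq_degree_gap E p)
     + 2 * sq_degree_gap E' (u,v)
     + 2 * (\<Sum>w\<in>neighbours V E u. \<delta> (u,w)) + 2 * (\<Sum>w\<in>neighbours V E v. \<delta> (v,w))"
proof -
  define A where "A x = Pair x ` neighbours V E x" for x
  define B where "B x = (\<lambda>w. (w,x)) ` neighbours V E x" for x
  have finV: "finite V" using sg unfolding simple_graph_def by simp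
  have finP: "finite (adj_pairs V E)"
    by (rule finite_subset[of _ "V \<times> V"]) (auto simp: adj_pairs_def finV)
  have noloop: "{a} \<notin> E" for a using simple_graph_no_loop[OF sg] .
  have pairs': "adj_pairs V E' = insert (u,v) (insert (v,u) (adj_pairs V E))"
    using uv unfolding adj_pairs_def E'_def add_edge_def by (auto simp: insert_commute)
  have new: "(u,v) \<notin> adj_pairs V E" "(v,u) \<notin> adj_pairs V E" "(u,v) \<noteq> (v,u)"
    using uv by (auto simp: adj_pairs_def insert_commute)
  have "(\<Sum>p\<in>adj_pairs V E'. sq_degree_gap E' p)
      = 2 * sq_degree_gap E' (u,v) + (\<Sum>p\<in>adj_pairs V E. sq_degree_gap E' p)"
    using pairs' new finP sq_degree_gap_swap[of E' v u] by simp
  also have "(\<Sum>p\<in>adj_pairs V E. sq_degree_gap E' p)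
      = (\<Sum>p\<in>adj_pairs V E. sq_degree_gap E p) + (\<Sum>p\<in>adj_pairs V E. \<delta> p)"
    unfolding \<delta>_def by (simp add: sum_subtractf)
  also have "(\<Sum>p\<in>adj_pairs V E. \<delta> p) = (\<Sum>p\<in>A u \<union> B u \<union> A v \<union> B v. \<delta> p)"
  proof (rule sum.mono_neutral_right[OF finP])
    show "A u \<union> B u \<union> A v \<union> B v \<subseteq> adj_pairs V E"
      using uv unfolding A_def B_def adj_pairs_def neighbours_def by (auto simp: insert_commute)
    show "\<forall>p\<in>adj_pairs V E - (A u \<union> B u \<union> A v \<union> B v). \<delta> p = 0"
    proof
      fix p assume p: "p \<in> adj_pairs V E - (A u \<union> B u \<union> A v \<union> B v)"
      obtain a b where ab: "p = (a,b)" by (cases p)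
      have "a \<noteq> u \<and> a \<noteq> v \<and> b \<noteq> u \<and> b \<noteq> v"
        using p uv unfolding ab A_def B_def adj_pairs_def neighbours_def
        by (auto simp: insert_commute image_iff)
      then show "\<delta> p = 0"
        unfolding \<delta>_def sq_degree_gap_def ab E'_def using degree_add_edge[OF sg uv(1)] by simp
    qed
  qed
  also have "\<dots> = (\<Sum>p\<in>A u. \<delta> p) + (\<Sum>p\<in>B u. \<delta> p) + (\<Sum>p\<in>A v. \<delta> p) + (\<Sum>p\<in>B v. \<delta> p)"
  proof -
    have "finite (A x)" "finite (B x)" for x
      unfolding A_def B_def using simple_graph_finite_neighbours[OF sg] by auto
    moreover have "A u \<inter> B u = {}" "A v \<inter> B v = {}"
      "(A u \<union> B u) \<inter> A v = {}" "(A u \<union> B u \<union> A v) \<inter> B v = {}"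
      using uv noloop unfolding A_def B_def neighbours_def by (auto simp: insert_commute)
    ultimately show ?thesis by (simp add: sum.union_disjoint)
  qed
  moreover have "(\<Sum>p\<in>A x. \<delta> p) = (\<Sum>w\<in>neighbours V E x. \<delta> (x,w))" for x
    unfolding A_def by (simp add: sum.reindex inj_on_def)
  moreover have "(\<Sum>p\<in>B x. \<delta> p) = (\<Sum>w\<in>neighbours V E x. \<delta> (x,w))" for x
    unfolding B_def \<delta>_def by (simp add: sum.reindex inj_on_def sq_degree_gap_swap)
  ultimately show ?thesis by simp
qed

lemma cM2_add_edge:
  assumes sg: "simple_graph V E" and uv: "{u,v} \<notin> E" "u \<noteq> v" "u \<in> V" "v \<in> V"
  defines "E' \<equiv> add_edge E u v"
  defines "lower \<equiv> \<lambda>x. int (card {w\<in>neighbours V E x. degree E w \<le> degree E x})"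
  shows "cM2 V E' = cM2 V E + sq_degree_gap E' (u,v)
     + (2 * int (degree E u) + 1) * (lower u - int (indeg V E u))
     + (2 * int (degree E v) + 1) * (lower v - int (indeg V E v))"
  using sum_adj_pairs_add_edge[OF assms(1-5)]
    sum_gap_change_at_endpoint[OF sg uv(1) _ uv(3)] sum_gap_change_at_endpoint[OF sg uv(1) _ uv(4)]
  unfolding cM2_eq_sum_adj_pairs E'_def lower_def by simp

theorem mainTheorem3:
  fixes V :: "'a set" and E :: "'a set set" and u v :: 'a
  assumes "simple_graph V E"
    and "u \<in> Xset V E" and "v \<in> Xset V E" and "u \<noteq> v"
    and "{u,v} \<notin> E"
  shows "cM2 V (add_edge E u v) \<ge> cM2 V E \<and>
         (cM2 V (add_edge E u v) = cM2 V E \<longrightarrow>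
           degree E u = degree E v \<and> outdeg V E u = indeg V E u \<and> outdeg V E v = indeg V E v)"
proof -
  define lower where "lower x = card {w\<in>neighbours V E x. degree E w \<le> degree E x}" for x
  have "u \<in> V" "v \<in> V" using assms(2,3) unfolding Xset_def by auto
  note increment = cM2_add_edge[OF assms(1,5,4) this, folded lower_def]
  have bal_u: "indeg V E u \<le> lower u" and bal_v: "indeg V E v \<le> lower v"
    using Xset_higher_le_lower_neighbours(1)[OF assms(1)] assms(2,3) unfolding lower_def by auto
  have gap: "sq_degree_gap (add_edge E u v) (u,v) \<ge> 0" unfolding sq_degree_gap_def by simp
  have endpoint_term_nonneg: "(2 * int (degree E x) + 1) * (int (lower x) - int (indeg V E x)) \<ge> 0"
    if "indeg V E x \<le> lower x" for x using that by simp
  note terms = endpoint_term_nonneg[OF bal_u] endpoint_term_nonneg[OF bal_v]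
  show ?thesis
  proof (intro conjI impI)
    show "cM2 V E \<le> cM2 V (add_edge E u v)" using increment gap terms by linarith
  next
    assume "cM2 V (add_edge E u v) = cM2 V E"
    then have gap0: "sq_degree_gap (add_edge E u v) (u,v) = 0"
      and "(2 * int (degree E u) + 1) * (int (lower u) - int (indeg V E u)) = 0"
      and "(2 * int (degree E v) + 1) * (int (lower v) - int (indeg V E v)) = 0"
      using increment gap terms by linarith+
    then have "lower u = indeg V E u" "lower v = indeg V E v"
      by (simp_all add: mult_eq_0_iff)
    then show "outdeg V E u = indeg V E u" "outdeg V E v = indeg V E v"
      using Xset_higher_le_lower_neighbours(2)[OF assms(1)] assms(2,3)
      unfolding lower_def by auto
    from gap0 show "degree E u = degree E v"
      using degree_add_edge[OF assms(1,5)] by (simp add: sq_degree_gap_eq_0_iff)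
  qed
qed

end
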